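(* Let $S$ be a profinite semigroup such that, for each integer $n\geq 1$, $S$ admits only finitely many open congruences of index $n$. Then $S$ has a fundamental system of open fully invariant congruences. In particular, this holds if $S$ is finitely generated (as a profinite semigroup).
   Context: A congruence $\rho$ on a profinite semigroup $S$ is open if it is an open subset of $S\times S$ (equivalently, it is the kernel of a continuous surjection from $S$ onto a finite semigroup). The index of an open congruence $\rho$ is the cardinality of $S/\rho$. A congruence $\rho$ is fully invariant if for every continuous endomorphism $f\colon S\to S$, $(x,y)\in\rho$ implies $(f(x),f(y))\in\rho$. The unique uniformity on the compact Hausdorff space $S$ has the open congruences as a fundamental system of entourages; a "fundamental system of open fully invariant congruences" means a family of open fully invariant congruences such that every open congruence on $S$ contains one of them. $S$ is finitely generated if some finite subset generates a dense subsemigroup. *)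

theory Defs
  imports "HOL-Analysis.Analysis"
begin

text \<open>A semigroup is modelled by a type of class semigroup_mult carrying a topology;
the underlying set of the semigroup is UNIV.\<close>

definition congruence_sg :: "('a::semigroup_mult \<times> 'a) set \<Rightarrow> bool" where
  "congruence_sg \<rho> \<longleftrightarrow> equiv UNIV \<rho> \<and>
     (\<forall>x y z. (x, y) \<in> \<rho> \<longrightarrow> (z * x, z * y) \<in> \<rho> \<and> (x * z, y * z) \<in> \<rho>)"

definition open_congruence :: "('a::{semigroup_mult,topological_space} \<times> 'a) set \<Rightarrow> bool" where
  "open_congruence \<rho> \<longleftrightarrow> congruence_sg \<rho> \<and> open \<rho>"

definition cong_index :: "('a \<times> 'a) set \<Rightarrow> nat" where
  "cong_index \<rho> = card (UNIV // \<rho>)"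

definition continuous_endo :: "('a::{semigroup_mult,topological_space} \<Rightarrow> 'a) \<Rightarrow> bool" where
  "continuous_endo f \<longleftrightarrow> continuous_on UNIV f \<and> (\<forall>x y. f (x * y) = f x * f y)"

definition fully_invariant :: "('a::{semigroup_mult,topological_space} \<times> 'a) set \<Rightarrow> bool" where
  "fully_invariant \<rho> \<longleftrightarrow>
     (\<forall>f. continuous_endo f \<longrightarrow> (\<forall>x y. (x, y) \<in> \<rho> \<longrightarrow> (f x, f y) \<in> \<rho>))"

text \<open>Profinite semigroup: compact Hausdorff topological semigroup that is residually finite,
i.e. any two distinct points are separated by an open congruence (equivalently, by a continuous
homomorphism onto a finite discrete semigroup).\<close>
definition profinite_semigroup :: "'a::{semigroup_mult,topological_space} itself \<Rightarrow> bool" where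
  "profinite_semigroup _ \<longleftrightarrow>
     compact (UNIV :: 'a set) \<and>
     (\<forall>x y :: 'a. x \<noteq> y \<longrightarrow> (\<exists>U V. open U \<and> open V \<and> x \<in> U \<and> y \<in> V \<and> U \<inter> V = {})) \<and>
     continuous_on (UNIV :: ('a \<times> 'a) set) (\<lambda>p. fst p * snd p) \<and>
     (\<forall>x y :: 'a. x \<noteq> y \<longrightarrow> (\<exists>\<rho>. open_congruence \<rho> \<and> (x, y) \<notin> \<rho>))"

definition gen_subsemigroup :: "'a::semigroup_mult set \<Rightarrow> 'a set" where
  "gen_subsemigroup A = \<Inter>{T. A \<subseteq> T \<and> (\<forall>x\<in>T. \<forall>y\<in>T. x * y \<in> T)}"

definition finitely_generated_profinite :: "'a::{semigroup_mult,topological_space} itself \<Rightarrow> bool" where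
  "finitely_generated_profinite _ \<longleftrightarrow>
     (\<exists>A :: 'a set. finite A \<and> closure (gen_subsemigroup A) = UNIV)"

definition has_fund_system_fi :: "'a::{semigroup_mult,topological_space} itself \<Rightarrow> bool" where
  "has_fund_system_fi _ \<longleftrightarrow>
     (\<exists>\<F> :: ('a \<times> 'a) set set.
        (\<forall>\<rho>\<in>\<F>. open_congruence \<rho> \<and> fully_invariant \<rho>) \<and>
        (\<forall>\<sigma>. open_congruence \<sigma> \<longrightarrow> (\<exists>\<rho>\<in>\<F>. \<rho> \<subseteq> \<sigma>)))"

end

theory Submission
  imports Defs
begin

text \<open>Given an open congruence \<sigma> of index n, intersect all open congruences of index at most n.
  Under the finiteness hypothesis this is a finite intersection, hence open; it lies in \<sigma>, and it
  is fully invariant because the preimage of an open congruence under a continuous endomorphism is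
  again an open congruence of no larger index.
  A finitely generated profinite semigroup satisfies the hypothesis: an open congruence is
  determined by its restriction to the dense subsemigroup generated by the finite set A, and that
  restriction is determined by the classes of the generators together with the multiplication
  table of the quotient, of which there are only finitely many once the index is fixed.\<close>

lemma open_Image_singleton:
  fixes \<rho> :: "('a::topological_space \<times> 'a) set"
  assumes "open \<rho>"
  shows "open (\<rho> `` {x})"
proof -
  have "\<rho> `` {x} = Pair x -` \<rho>" by auto
  moreover have "continuous_on UNIV (Pair x :: 'a \<Rightarrow> 'a \<times> 'a)"
    by (intro continuous_on_Pair continuous_on_const continuous_on_id)
  ultimately show ?thesis using open_vimage assms by metis
qed

lemma cong_index_pos:
  assumes "finite (UNIV // \<rho>)"
  shows "cong_index \<rho> \<ge> 1"
proof -
  have "UNIV // \<rho> \<noteq> {}" by (auto simp: quotient_def)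
  then show ?thesis using assms by (simp add: cong_index_def Suc_le_eq card_gt_0_iff)
qed

lemma finite_quotient_open_congruence:
  fixes \<rho> :: "('a::{semigroup_mult,topological_space} \<times> 'a) set"
  assumes compact: "compact (UNIV :: 'a set)" and "open_congruence \<rho>"
  shows "finite (UNIV // \<rho>)"
proof -
  have eq: "equiv UNIV \<rho>" and "open \<rho>"
    using assms(2) by (auto simp: open_congruence_def congruence_sg_def)
  have "UNIV \<subseteq> \<Union>(UNIV // \<rho>)" using Union_quotient[OF eq] by simp
  moreover have "\<forall>B\<in>UNIV // \<rho>. open B"
    using \<open>open \<rho>\<close> open_Image_singleton by (auto simp: quotient_def)
  ultimately obtain T where T: "T \<subseteq> UNIV // \<rho>" "finite T" "UNIV \<subseteq> \<Union>T"
    using compactE[OF compact] by metis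
  have "UNIV // \<rho> \<subseteq> T"
  proof
    fix C assume C: "C \<in> UNIV // \<rho>"
    then obtain x where "x \<in> C" using eq in_quotient_imp_non_empty by blast
    then obtain D where D: "D \<in> T" "x \<in> D" using T(3) by blast
    then show "C \<in> T" using quotient_disj[OF eq C] T(1) \<open>x \<in> C\<close> by blast
  qed
  then show ?thesis using T(2) finite_subset by blast
qed

lemma congruence_sg_Inter:
  fixes \<F> :: "('a::semigroup_mult \<times> 'a) set set"
  assumes "\<F> \<noteq> {}" and "\<forall>\<tau>\<in>\<F>. congruence_sg \<tau>"
  shows "congruence_sg (\<Inter>\<F>)"
proof -
  have e: "\<And>\<tau>. \<tau> \<in> \<F> \<Longrightarrow> refl \<tau> \<and> sym \<tau> \<and> trans \<tau>"
    using assms(2) by (auto simp: congruence_sg_def equiv_def)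
  have "refl (\<Inter>\<F>)" using e by (simp add: refl_on_def)
  moreover have "sym (\<Inter>\<F>)" unfolding sym_def using e by (meson InterD InterI symD)
  moreover have "trans (\<Inter>\<F>)" unfolding trans_def using e by (meson InterD InterI transD)
  ultimately show ?thesis using assms(2) by (simp add: congruence_sg_def equiv_def)
qed

lemma open_congruence_vimage:
  fixes \<tau> :: "('a::{semigroup_mult,topological_space} \<times> 'a) set"
  assumes \<tau>: "open_congruence \<tau>" and f: "continuous_endo f"
  shows "open_congruence {(x, y). (f x, f y) \<in> \<tau>}"
proof -
  let ?\<tau>' = "{(x, y). (f x, f y) \<in> \<tau>}"
  have hom: "\<And>x y. f (x * y) = f x * f y" and cf: "continuous_on UNIV f"
    using f by (auto simp: continuous_endo_def)
  have "refl \<tau>" "sym \<tau>" "trans \<tau>"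
    using \<tau> by (auto simp: open_congruence_def congruence_sg_def equiv_def)
  then have "refl ?\<tau>' \<and> sym ?\<tau>' \<and> trans ?\<tau>'"
    unfolding refl_on_def sym_def trans_def by blast
  moreover have "\<forall>x y z. (x, y) \<in> ?\<tau>' \<longrightarrow> (z * x, z * y) \<in> ?\<tau>' \<and> (x * z, y * z) \<in> ?\<tau>'"
    using \<tau> hom by (simp add: open_congruence_def congruence_sg_def)
  moreover have "open ?\<tau>'"
  proof -
    have "?\<tau>' = (\<lambda>p. (f (fst p), f (snd p))) -` \<tau>" by auto
    moreover have "continuous_on UNIV (\<lambda>p::'a \<times> 'a. (f (fst p), f (snd p)))"
      by (intro continuous_on_Pair continuous_on_compose2[OF cf] continuous_on_fst
          continuous_on_snd continuous_on_id) auto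
    ultimately show ?thesis using open_vimage \<tau> by (metis open_congruence_def)
  qed
  ultimately show ?thesis by (simp add: open_congruence_def congruence_sg_def equiv_def)
qed

lemma cong_index_vimage_le:
  assumes "finite (UNIV // \<tau>)"
  shows "cong_index {(x, y). (f x, f y) \<in> \<tau>} \<le> cong_index \<tau>"
proof -
  let ?\<tau>' = "{(x, y). (f x, f y) \<in> \<tau>}"
  have sub: "UNIV // ?\<tau>' \<subseteq> (\<lambda>C. f -` C) ` (UNIV // \<tau>)"
  proof
    fix C assume "C \<in> UNIV // ?\<tau>'"
    then obtain x where "C = ?\<tau>' `` {x}" by (auto simp: quotient_def)
    then have "C = f -` (\<tau> `` {f x})" by auto
    then show "C \<in> (\<lambda>C. f -` C) ` (UNIV // \<tau>)" by (auto simp: quotient_def)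
  qed
  have "card (UNIV // ?\<tau>') \<le> card ((\<lambda>C. f -` C) ` (UNIV // \<tau>))"
    using sub assms by (intro card_mono) auto
  also have "\<dots> \<le> card (UNIV // \<tau>)" using card_image_le assms by blast
  finally show ?thesis by (simp add: cong_index_def)
qed

lemma has_fund_system_fi_if_finitely_many_of_each_index:
  fixes S :: "'a::{semigroup_mult,topological_space} itself"
  assumes compact: "compact (UNIV :: 'a set)"
    and fin: "\<forall>n::nat. n \<ge> 1 \<longrightarrow> finite {\<rho> :: ('a \<times> 'a) set. open_congruence \<rho> \<and> cong_index \<rho> = n}"
  shows "has_fund_system_fi S"
  unfolding has_fund_system_fi_def
proof (intro exI[of _ "{\<rho>. open_congruence \<rho> \<and> fully_invariant \<rho>}"] conjI allI impI)
  fix \<sigma> :: "('a \<times> 'a) set" assume \<sigma>: "open_congruence \<sigma>"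
  define T where "T = {\<tau> :: ('a \<times> 'a) set. open_congruence \<tau> \<and> cong_index \<tau> \<in> {1..cong_index \<sigma>}}"
  have "T = (\<Union>k\<in>{1..cong_index \<sigma>}. {\<tau>. open_congruence \<tau> \<and> cong_index \<tau> = k})"
    by (auto simp: T_def)
  then have "finite T" using fin by auto
  have "\<sigma> \<in> T"
    using \<sigma> cong_index_pos[OF finite_quotient_open_congruence[OF compact \<sigma>]] by (simp add: T_def)
  have "open_congruence (\<Inter>T)"
    using \<open>\<sigma> \<in> T\<close> \<open>finite T\<close> unfolding open_congruence_def
    by (auto intro!: congruence_sg_Inter open_Inter simp: T_def open_congruence_def)
  moreover have "fully_invariant (\<Inter>T)"
    unfolding fully_invariant_def
  proof (intro allI impI InterI)
    fix f :: "'a \<Rightarrow> 'a" and x y \<tau>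
    assume f: "continuous_endo f" and xy: "(x, y) \<in> \<Inter>T" and "\<tau> \<in> T"
    then have \<tau>: "open_congruence \<tau>" "cong_index \<tau> \<le> cong_index \<sigma>" by (auto simp: T_def)
    let ?\<tau>' = "{(x, y). (f x, f y) \<in> \<tau>}"
    have "open_congruence ?\<tau>'" using open_congruence_vimage[OF \<tau>(1) f] .
    moreover have "cong_index ?\<tau>' \<le> cong_index \<sigma>"
      using cong_index_vimage_le[OF finite_quotient_open_congruence[OF compact \<tau>(1)]] \<tau>(2)
      by (rule le_trans)
    ultimately have "?\<tau>' \<in> T"
      using cong_index_pos[OF finite_quotient_open_congruence[OF compact]] by (simp add: T_def)
    then show "(f x, f y) \<in> \<tau>" using xy by blast
  qed
  ultimately show "\<exists>\<rho>\<in>{\<rho>. open_congruence \<rho> \<and> fully_invariant \<rho>}. \<rho> \<subseteq> \<sigma>"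
    using \<open>\<sigma> \<in> T\<close> by blast
qed simp

lemma gen_subsemigroup_induct:
  assumes "g \<in> gen_subsemigroup A" "A \<subseteq> P" "\<forall>x\<in>P. \<forall>y\<in>P. x * y \<in> P"
  shows "g \<in> P"
  using assms unfolding gen_subsemigroup_def by blast

lemma open_congruence_subset_if_dense:
  fixes \<tau> \<tau>' :: "('a::{semigroup_mult,topological_space} \<times> 'a) set"
  assumes \<tau>: "open_congruence \<tau>" and \<tau>': "open_congruence \<tau>'"
    and dense: "closure G = UNIV"
    and agree: "\<And>g h. g \<in> G \<Longrightarrow> h \<in> G \<Longrightarrow> (g, h) \<in> \<tau> \<Longrightarrow> (g, h) \<in> \<tau>'"
  shows "\<tau> \<subseteq> \<tau>'"
proof (clarify)
  fix x y assume "(x, y) \<in> \<tau>"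
  define \<mu> where "\<mu> = \<tau> \<inter> \<tau>'"
  have e: "equiv UNIV \<tau>" "equiv UNIV \<tau>'"
    using \<tau> \<tau>' by (auto simp: open_congruence_def congruence_sg_def)
  have near: "\<exists>g\<in>G. (z, g) \<in> \<mu>" for z
  proof -
    have "open (\<mu> `` {z})"
      using \<tau> \<tau>' by (intro open_Image_singleton) (auto simp: \<mu>_def open_congruence_def)
    moreover have "z \<in> \<mu> `` {z}" using e by (auto simp: \<mu>_def equiv_def refl_on_def)
    ultimately have "\<mu> `` {z} \<inter> G \<noteq> {}"
      using open_Int_closure_eq_empty dense by (metis Int_UNIV_right empty_iff)
    then show ?thesis by auto
  qed
  obtain g h where g: "g \<in> G" "(x, g) \<in> \<mu>" and h: "h \<in> G" "(y, h) \<in> \<mu>"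
    using near by meson
  have "(g, h) \<in> \<tau>" using g h \<open>(x, y) \<in> \<tau>\<close> e(1) unfolding \<mu>_def
    by (meson IntD1 equiv_def symD transD)
  then have "(g, h) \<in> \<tau>'" using agree g h by blast
  then show "(x, y) \<in> \<tau>'" using g h e(2) unfolding \<mu>_def
    by (meson IntD2 equiv_def symD transD)
qed

definition cong_labelling ::
    "nat \<Rightarrow> ('a::semigroup_mult \<times> 'a) set \<Rightarrow> ('a \<Rightarrow> nat) \<Rightarrow> (nat \<Rightarrow> nat \<Rightarrow> nat) \<Rightarrow> bool"
  where "cong_labelling n \<tau> E m \<longleftrightarrow>
    (\<forall>x. E x < n) \<and> (\<forall>i<n. \<forall>j<n. m i j < n) \<and>
    (\<forall>x y. E x = E y \<longleftrightarrow> (x, y) \<in> \<tau>) \<and> (\<forall>x y. E (x * y) = m (E x) (E y))"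

lemma cong_labelling_exists:
  assumes "congruence_sg \<tau>" and "cong_index \<tau> = n" and "n \<ge> 1"
  shows "\<exists>E m. cong_labelling n \<tau> E m"
proof -
  have eq: "equiv UNIV \<tau>" using assms(1) by (simp add: congruence_sg_def)
  have "finite (UNIV // \<tau>)" using assms(2,3) by (auto simp: cong_index_def card_ge_0_finite)
  then obtain e where e: "bij_betw e (UNIV // \<tau>) {0..<n}"
    using ex_bij_betw_finite_nat assms(2) unfolding cong_index_def by blast
  define E where "E x = e (\<tau> `` {x})" for x
  define rep where "rep i = (SOME x. E x = i)" for i
  have E_lt: "E x < n" for x
    using bij_betw_apply[OF e] unfolding E_def by (auto simp: quotient_def)
  have E_eq: "E x = E y \<longleftrightarrow> (x, y) \<in> \<tau>" for x y
  proof -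
    have "E x = E y \<longleftrightarrow> \<tau> `` {x} = \<tau> `` {y}"
      using e unfolding E_def bij_betw_def by (auto simp: quotient_def inj_on_def)
    then show ?thesis using eq_equiv_class_iff[OF eq] by simp
  qed
  have rep: "(rep (E x), x) \<in> \<tau>" for x
  proof -
    have "E (rep (E x)) = E x" unfolding rep_def by (rule someI_ex) blast
    then show ?thesis using E_eq by blast
  qed
  have "E (x * y) = E (rep (E x) * rep (E y))" for x y
  proof -
    have "(rep (E x) * rep (E y), x * rep (E y)) \<in> \<tau>" "(x * rep (E y), x * y) \<in> \<tau>"
      using assms(1) rep by (auto simp: congruence_sg_def)
    then have "(rep (E x) * rep (E y), x * y) \<in> \<tau>" using eq by (meson equiv_def transD)
    then show ?thesis using E_eq by metis
  qed
  then have "cong_labelling n \<tau> E (\<lambda>i j. E (rep i * rep j))"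
    using E_lt E_eq by (simp add: cong_labelling_def)
  then show ?thesis by blast
qed

lemma cong_labelling_agree_on_gen_subsemigroup:
  assumes L: "cong_labelling n \<tau> E m" and L': "cong_labelling n \<tau>' E' m'"
    and gens: "\<forall>a\<in>A. E a = E' a"
    and table: "\<forall>i<n. \<forall>j<n. m i j = m' i j"
    and "g \<in> gen_subsemigroup A"
  shows "E g = E' g"
proof -
  have "g \<in> {g. E g = E' g}"
  proof (rule gen_subsemigroup_induct[OF \<open>g \<in> gen_subsemigroup A\<close>])
    show "A \<subseteq> {g. E g = E' g}" using gens by blast
    show "\<forall>x\<in>{g. E g = E' g}. \<forall>y\<in>{g. E g = E' g}. x * y \<in> {g. E g = E' g}"
    proof (intro ballI)
      fix x y assume "x \<in> {g. E g = E' g}" "y \<in> {g. E g = E' g}"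
      then have "E x = E' x" "E y = E' y" by simp_all
      moreover have "E x < n" "E y < n" using L by (simp_all add: cong_labelling_def)
      ultimately have "m (E x) (E y) = m' (E' x) (E' y)" using table by simp
      then show "x * y \<in> {g. E g = E' g}"
        using L L' by (simp add: cong_labelling_def)
    qed
  qed
  then show ?thesis by simp
qed

lemma finite_open_congruences_of_index_if_finitely_generated:
  fixes A :: "'a::{semigroup_mult,topological_space} set"
  assumes "finite A" and dense: "closure (gen_subsemigroup A) = UNIV" and "n \<ge> 1"
  shows "finite {\<rho> :: ('a \<times> 'a) set. open_congruence \<rho> \<and> cong_index \<rho> = n}"
proof -
  define P where "P = {\<rho> :: ('a \<times> 'a) set. open_congruence \<rho> \<and> cong_index \<rho> = n}"
  have "\<forall>\<tau>\<in>P. \<exists>E m. cong_labelling n \<tau> E m"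
    using cong_labelling_exists \<open>n \<ge> 1\<close> by (auto simp: P_def open_congruence_def)
  then obtain E m where L: "\<And>\<tau>. \<tau> \<in> P \<Longrightarrow> cong_labelling n \<tau> (E \<tau>) (m \<tau>)"
    by metis
  define code where "code \<tau> = (restrict (E \<tau>) A, restrict (\<lambda>(i, j). m \<tau> i j) ({..<n} \<times> {..<n}))"
    for \<tau>
  have "inj_on code P"
  proof (rule inj_onI)
    fix \<tau> \<tau>' assume "\<tau> \<in> P" "\<tau>' \<in> P" and "code \<tau> = code \<tau>'"
    then have "restrict (E \<tau>) A = restrict (E \<tau>') A"
      and table: "restrict (\<lambda>(i, j). m \<tau> i j) ({..<n} \<times> {..<n}) =
                  restrict (\<lambda>(i, j). m \<tau>' i j) ({..<n} \<times> {..<n})"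
      by (simp_all add: code_def)
    then have "\<forall>a\<in>A. E \<tau> a = E \<tau>' a" by (metis restrict_apply')
    moreover have "\<forall>i<n. \<forall>j<n. m \<tau> i j = m \<tau>' i j"
    proof (intro allI impI)
      fix i j assume "i < n" "j < n"
      then show "m \<tau> i j = m \<tau>' i j" using fun_cong[OF table, of "(i, j)"] by simp
    qed
    ultimately have "E \<tau> g = E \<tau>' g" if "g \<in> gen_subsemigroup A" for g
      using cong_labelling_agree_on_gen_subsemigroup[OF L L] \<open>\<tau> \<in> P\<close> \<open>\<tau>' \<in> P\<close> that
      by blast
    then have agree: "(g, h) \<in> \<tau> \<longleftrightarrow> (g, h) \<in> \<tau>'"
      if "g \<in> gen_subsemigroup A" "h \<in> gen_subsemigroup A" for g h
      using L[OF \<open>\<tau> \<in> P\<close>] L[OF \<open>\<tau>' \<in> P\<close>] that unfolding cong_labelling_def by metis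
    have "open_congruence \<tau>" "open_congruence \<tau>'"
      using \<open>\<tau> \<in> P\<close> \<open>\<tau>' \<in> P\<close> by (auto simp: P_def)
    then show "\<tau> = \<tau>'"
      using open_congruence_subset_if_dense[OF _ _ dense] agree by (intro subset_antisym) blast+
  qed
  moreover have "code ` P \<subseteq> (A \<rightarrow>\<^sub>E {..<n}) \<times> ({..<n} \<times> {..<n} \<rightarrow>\<^sub>E {..<n})"
  proof (intro image_subsetI)
    fix \<tau> assume "\<tau> \<in> P"
    then show "code \<tau> \<in> (A \<rightarrow>\<^sub>E {..<n}) \<times> ({..<n} \<times> {..<n} \<rightarrow>\<^sub>E {..<n})"
      using L[OF \<open>\<tau> \<in> P\<close>]
      by (auto simp: code_def cong_labelling_def restrict_PiE_iff split: prod.splits)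
  qed
  moreover have "finite ((A \<rightarrow>\<^sub>E {..<n}) \<times> ({..<n} \<times> {..<n} \<rightarrow>\<^sub>E {..<n}))"
    using \<open>finite A\<close> by (intro finite_cartesian_product finite_PiE) auto
  ultimately show ?thesis unfolding P_def[symmetric] using finite_imageD finite_subset by blast
qed

theorem proposition2:
  fixes S :: "'a::{semigroup_mult,topological_space} itself"
  assumes "profinite_semigroup S"
  shows "((\<forall>n::nat. n \<ge> 1 \<longrightarrow>
             finite {\<rho> :: ('a \<times> 'a) set. open_congruence \<rho> \<and> cong_index \<rho> = n})
            \<longrightarrow> has_fund_system_fi S)
       \<and> (finitely_generated_profinite S \<longrightarrow> has_fund_system_fi S)"
proof -
  have compact: "compact (UNIV :: 'a set)" using assms by (simp add: profinite_semigroup_def)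
  have fg: "finitely_generated_profinite S \<longrightarrow> has_fund_system_fi S"
  proof
    assume "finitely_generated_profinite S"
    then obtain A :: "'a set" where "finite A" "closure (gen_subsemigroup A) = UNIV"
      unfolding finitely_generated_profinite_def by blast
    then show "has_fund_system_fi S"
      using has_fund_system_fi_if_finitely_many_of_each_index[OF compact]
        finite_open_congruences_of_index_if_finitely_generated by blast
  qed
  show ?thesis
    using has_fund_system_fi_if_finitely_many_of_each_index[OF compact] fg by blast
qed

end
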